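(* For $n\in\mathbb{N}$ and $q>0$, let $P_n^{\mathrm{LR}^-;q}$ be the probability measure on the symmetric group $S_n$ given by $$P_n^{\mathrm{LR}^-;q}(\sigma)=\frac{q^{\mathrm{LR}^-_n(\sigma)}}{q(q+1)\cdots(q+n-1)},\qquad \sigma\in S_n,$$ where $\mathrm{LR}^-_n(\sigma)=|\{j\in[n]:\sigma_j=\min\{\sigma_i:1\le i\le j\}\}|$ is the number of left-to-right minima of $\sigma=\sigma_1\sigma_2\cdots\sigma_n$. Let $E_n^{\mathrm{LR}^-;q}$ denote expectation with respect to $P_n^{\mathrm{LR}^-;q}$, and let $\{q_n\}_{n=1}^\infty$ be a sequence of positive numbers. Then: (i) If $q_n=o(\frac1{\log n})$, then $\lim_{n\to\infty}E_n^{\mathrm{LR}^-;q_n}\mathrm{LR}^-_n=1$. (ii) If $\lim_{n\to\infty}q_n\log n=c\in(0,\infty)$, then $\lim_{n\to\infty}E_n^{\mathrm{LR}^-;q_n}\mathrm{LR}^-_n=1+c$. (iii) If $\lim_{n\to\infty}q_n\log n=\infty$ and $q_n=O(1)$, then $E_n^{\mathrm{LR}^-;q_n}\mathrm{LR}^-_n\sim q_n\log n$. (iv) If $q_n\to\infty$ and $q_n=o(n)$, then $E_n^{\mathrm{LR}^-;q_n}\mathrm{LR}^-_n\sim q_n\log\frac{n+q_n}{1+q_n}$. In particular, if $q_n\sim cn^\alpha$ with $c>0$ and $\alpha\in(0,1)$, then $E_n^{\mathrm{LR}^-;q_n}\mathrm{LR}^-_n\sim c(1-\alpha)n^\alpha\log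 n$. (v) If $q_n\sim cn$ with $c>0$, then $E_n^{\mathrm{LR}^-;q_n}\mathrm{LR}^-_n\sim c\big(\log\frac{1+c}{c}\big)n$; moreover $c\log\frac{1+c}{c}\to 0$ as $c\to0$ and $c\log\frac{1+c}{c}\to1$ as $c\to\infty$. (vi) If $\lim_{n\to\infty}\frac{q_n}{n}=\infty$, then $E_n^{\mathrm{LR}^-;q_n}\mathrm{LR}^-_n\sim n$.
   Context: $[n]=\{1,\dots,n\}$. For sequences $a_n,b_n$, $a_n\sim b_n$ means $a_n/b_n\to1$ as $n\to\infty$. *)

theory Defs
  imports "HOL-Analysis.Analysis" "HOL-Combinatorics.Permutations" "HOL-Library.Landau_Symbols"
begin

definition perms :: "nat \<Rightarrow> (nat \<Rightarrow> nat) set" where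
  "perms n = {\<sigma>. \<sigma> permutes {1..n}}"

definition LRmin :: "nat \<Rightarrow> (nat \<Rightarrow> nat) \<Rightarrow> nat" where
  "LRmin n \<sigma> = card {j \<in> {1..n}. \<sigma> j = Min (\<sigma> ` {1..j})}"

definition P_LR :: "nat \<Rightarrow> real \<Rightarrow> (nat \<Rightarrow> nat) \<Rightarrow> real" where
  "P_LR n q \<sigma> = q ^ LRmin n \<sigma> / pochhammer q n"

definition E_LR :: "nat \<Rightarrow> real \<Rightarrow> real" where
  "E_LR n q = (\<Sum>\<sigma>\<in>perms n. real (LRmin n \<sigma>) * P_LR n q \<sigma>)"

end

theory Submission
  imports Defs "HOL-Real_Asymp.Real_Asymp"
begin

(* Appending a last letter v to a permutation of [n], shifting the old values >= v up by one, is a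
   bijection S_n x [n+1] -> S_(n+1), and the new letter is a left-to-right minimum iff v = 1.  Hence
   the sum of q^LR over S_n is the rising factorial q(q+1)...(q+n-1), and the expectation, which is
   q d/dq of its logarithm, equals sum_{j<n} q/(q+j).  Comparing this sum with the integral of
   q/(q+x) shows that it lies within 2 of q log((n+q)/(1+q)) and within q + q^2 of 1 + q log n;
   together with n q/(q+n) <= E <= n these bounds settle every regime. *)

definition shift_from :: "nat \<Rightarrow> nat \<Rightarrow> nat" where
  "shift_from v t = (if v \<le> t then Suc t else t)"

lemma shift_from_le_iff [simp]: "shift_from v a \<le> shift_from v b \<longleftrightarrow> a \<le> b"
  by (auto simp: shift_from_def)

lemma shift_from_eq_iff [simp]: "shift_from v a = shift_from v b \<longleftrightarrow> a = b"
  by (auto simp: shift_from_def)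

lemma shift_from_neq [simp]: "shift_from v t \<noteq> v" "v \<noteq> shift_from v t"
  by (auto simp: shift_from_def)

definition perm_snoc :: "nat \<Rightarrow> (nat \<Rightarrow> nat) \<Rightarrow> nat \<Rightarrow> nat \<Rightarrow> nat" where
  "perm_snoc n \<tau> v = (\<lambda>i. if i \<in> {1..n} then shift_from v (\<tau> i) else if i = Suc n then v else i)"

lemma eq_Min_image_iff:
  fixes \<sigma> :: "'a \<Rightarrow> 'b::linorder"
  assumes "finite A" "j \<in> A"
  shows "\<sigma> j = Min (\<sigma> ` A) \<longleftrightarrow> (\<forall>i\<in>A. \<sigma> j \<le> \<sigma> i)"
proof -
  have "Min (\<sigma> ` A) = \<sigma> j \<longleftrightarrow> \<sigma> j \<in> \<sigma> ` A \<and> (\<forall>a\<in>\<sigma> ` A. \<sigma> j \<le> a)"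
    using assms by (intro Min_eq_iff) auto
  then show ?thesis using assms by auto
qed

lemma perm_snoc_permutes:
  assumes \<tau>: "\<tau> permutes {1..n}" and v: "v \<in> {1..Suc n}"
  shows "perm_snoc n \<tau> v permutes {1..Suc n}"
proof (rule bij_imp_permutes)
  let ?\<sigma> = "perm_snoc n \<tau> v"
  have "?\<sigma> i \<in> {1..Suc n}" if "i \<in> {1..Suc n}" for i
  proof (cases "i \<in> {1..n}")
    case True
    then have "\<tau> i \<in> {1..n}" using permutes_in_image[OF \<tau>] by simp
    then show ?thesis using True by (simp add: perm_snoc_def shift_from_def)
  qed (use that v in \<open>simp add: perm_snoc_def\<close>)
  then have "?\<sigma> ` {1..Suc n} \<subseteq> {1..Suc n}" by blast
  moreover have "inj_on ?\<sigma> {1..Suc n}"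
  proof (rule inj_onI)
    fix x y assume x: "x \<in> {1..Suc n}" and y: "y \<in> {1..Suc n}" and eq: "?\<sigma> x = ?\<sigma> y"
    show "x = y"
    proof (cases "x \<in> {1..n}"; cases "y \<in> {1..n}")
      assume "x \<in> {1..n}" "y \<in> {1..n}"
      then show ?thesis using eq permutes_inj[OF \<tau>] by (simp add: perm_snoc_def inj_eq)
    qed (use x y eq in \<open>auto simp: perm_snoc_def\<close>)
  qed
  ultimately show "bij_betw ?\<sigma> {1..Suc n} {1..Suc n}"
    by (simp add: bij_betw_def endo_inj_surj)
  show "?\<sigma> i = i" if "i \<notin> {1..Suc n}" for i
    using that by (auto simp: perm_snoc_def)
qed

lemma inj_on_perm_snoc: "inj_on (\<lambda>(\<tau>, v). perm_snoc n \<tau> v) (perms n \<times> {1..Suc n})"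
proof (rule inj_onI, clarify)
  fix \<tau> v \<tau>' v'
  assume \<tau>: "\<tau> \<in> perms n" "\<tau>' \<in> perms n" and eq: "perm_snoc n \<tau> v = perm_snoc n \<tau>' v'"
  from fun_cong[OF eq, of "Suc n"] have "v = v'" by (simp add: perm_snoc_def)
  moreover have "\<tau> i = \<tau>' i" for i
  proof (cases "i \<in> {1..n}")
    case True
    then show ?thesis using fun_cong[OF eq, of i] \<open>v = v'\<close> by (simp add: perm_snoc_def)
  next
    case False
    then show ?thesis using \<tau> by (simp add: perms_def permutes_not_in)
  qed
  ultimately show "\<tau> = \<tau>' \<and> v = v'" by auto
qed

lemma bij_betw_perm_snoc:
  "bij_betw (\<lambda>(\<tau>, v). perm_snoc n \<tau> v) (perms n \<times> {1..Suc n}) (perms (Suc n))"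
proof -
  have "(\<lambda>(\<tau>, v). perm_snoc n \<tau> v) ` (perms n \<times> {1..Suc n}) = perms (Suc n)"
  proof (rule card_subset_eq)
    show "finite (perms (Suc n))" by (simp add: perms_def finite_permutations)
    show "(\<lambda>(\<tau>, v). perm_snoc n \<tau> v) ` (perms n \<times> {1..Suc n}) \<subseteq> perms (Suc n)"
      using perm_snoc_permutes by (auto simp: perms_def)
    show "card ((\<lambda>(\<tau>, v). perm_snoc n \<tau> v) ` (perms n \<times> {1..Suc n})) = card (perms (Suc n))"
      unfolding card_image[OF inj_on_perm_snoc]
      by (simp add: card_cartesian_product perms_def card_permutations)
  qed
  then show ?thesis using inj_on_perm_snoc by (simp add: bij_betw_def)
qed

lemma LRmin_perm_snoc:
  assumes \<tau>: "\<tau> permutes {1..n}" and v: "v \<in> {1..Suc n}"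
  shows "LRmin (Suc n) (perm_snoc n \<tau> v) = LRmin n \<tau> + (if v = 1 then 1 else 0)"
proof -
  let ?\<sigma> = "perm_snoc n \<tau> v"
  have old: "?\<sigma> j = Min (?\<sigma> ` {1..j}) \<longleftrightarrow> \<tau> j = Min (\<tau> ` {1..j})" if "j \<in> {1..n}" for j
  proof -
    have "?\<sigma> j = Min (?\<sigma> ` {1..j}) \<longleftrightarrow> (\<forall>i\<in>{1..j}. ?\<sigma> j \<le> ?\<sigma> i)"
      using that by (intro eq_Min_image_iff) auto
    also have "\<dots> \<longleftrightarrow> (\<forall>i\<in>{1..j}. \<tau> j \<le> \<tau> i)"
      using that by (auto simp: perm_snoc_def)
    also have "\<dots> \<longleftrightarrow> \<tau> j = Min (\<tau> ` {1..j})"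
      using that by (intro eq_Min_image_iff[symmetric]) auto
    finally show ?thesis .
  qed
  have "?\<sigma> (Suc n) = Min (?\<sigma> ` {1..Suc n}) \<longleftrightarrow> (\<forall>i\<in>{1..Suc n}. v \<le> ?\<sigma> i)"
    by (subst eq_Min_image_iff) (auto simp: perm_snoc_def)
  also have "\<dots> \<longleftrightarrow> v = 1"
  proof
    assume min: "\<forall>i\<in>{1..Suc n}. v \<le> ?\<sigma> i"
    show "v = 1"
    proof (cases "n = 0")
      case False
      then have "1 \<in> \<tau> ` {1..n}"
        using permutes_image[OF \<tau>] by simp
      then obtain i where i: "i \<in> {1..n}" "\<tau> i = 1" by (rule imageE) simp
      then have "v \<le> shift_from v 1" using min by (force simp: perm_snoc_def)
      then show ?thesis using v by (auto simp: shift_from_def split: if_splits)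
    qed (use v in auto)
  next
    assume "v = 1"
    show "\<forall>i\<in>{1..Suc n}. v \<le> ?\<sigma> i"
    proof
      fix i assume i: "i \<in> {1..Suc n}"
      show "v \<le> ?\<sigma> i"
      proof (cases "i \<in> {1..n}")
        case True
        then have "\<tau> i \<in> {1..n}" using permutes_in_image[OF \<tau>] by simp
        then show ?thesis using True \<open>v = 1\<close> by (simp add: perm_snoc_def shift_from_def)
      qed (use i \<open>v = 1\<close> in \<open>simp add: perm_snoc_def\<close>)
    qed
  qed
  finally have new: "?\<sigma> (Suc n) = Min (?\<sigma> ` {1..Suc n}) \<longleftrightarrow> v = 1" .
  have "{j \<in> {1..Suc n}. ?\<sigma> j = Min (?\<sigma> ` {1..j})}
      = {j \<in> {1..n}. \<tau> j = Min (\<tau> ` {1..j})} \<union> (if v = 1 then {Suc n} else {})"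
    using old new by (auto simp: le_Suc_eq)
  then show ?thesis
    by (simp add: LRmin_def)
qed

lemma sum_perms_Suc:
  fixes h :: "nat \<Rightarrow> 'a::comm_semiring_1"
  shows "(\<Sum>\<sigma>\<in>perms (Suc n). h (LRmin (Suc n) \<sigma>))
       = (\<Sum>\<tau>\<in>perms n. h (Suc (LRmin n \<tau>)) + of_nat n * h (LRmin n \<tau>))"
proof -
  have "(\<Sum>\<sigma>\<in>perms (Suc n). h (LRmin (Suc n) \<sigma>))
      = (\<Sum>(\<tau>, v)\<in>perms n \<times> {1..Suc n}. h (LRmin (Suc n) (perm_snoc n \<tau> v)))"
    by (subst sum.reindex_bij_betw[OF bij_betw_perm_snoc, symmetric]) (simp add: case_prod_beta')
  also have "\<dots> = (\<Sum>\<tau>\<in>perms n. \<Sum>v\<in>{1..Suc n}. h (LRmin n \<tau> + (if v = 1 then 1 else 0)))"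
    by (simp add: sum.cartesian_product[symmetric] LRmin_perm_snoc perms_def)
  also have "\<dots> = (\<Sum>\<tau>\<in>perms n. h (Suc (LRmin n \<tau>)) + of_nat n * h (LRmin n \<tau>))"
  proof (rule sum.cong)
    fix \<tau>
    have "{1..Suc n} = insert 1 {2..Suc n}" by auto
    then show "(\<Sum>v\<in>{1..Suc n}. h (LRmin n \<tau> + (if v = 1 then 1 else 0)))
             = h (Suc (LRmin n \<tau>)) + of_nat n * h (LRmin n \<tau>)"
      by simp
  qed simp
  finally show ?thesis .
qed

lemma sum_power_LRmin:
  fixes x :: "'a::comm_semiring_1"
  shows "(\<Sum>\<sigma>\<in>perms n. x ^ LRmin n \<sigma>) = pochhammer x n"
proof (induction n)
  case 0
  then show ?case by (simp add: perms_def LRmin_def)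
next
  case (Suc n)
  have "(\<Sum>\<sigma>\<in>perms (Suc n). x ^ LRmin (Suc n) \<sigma>) = (\<Sum>\<tau>\<in>perms n. x ^ LRmin n \<tau> * (x + of_nat n))"
    by (simp add: sum_perms_Suc algebra_simps)
  then show ?case by (simp add: sum_distrib_right[symmetric] Suc.IH pochhammer_Suc)
qed

lemma sum_LRmin_mult_power:
  fixes x :: real
  assumes "x > 0"
  shows "(\<Sum>\<sigma>\<in>perms n. real (LRmin n \<sigma>) * x ^ LRmin n \<sigma>) = pochhammer x n * (\<Sum>j<n. x / (x + real j))"
proof (induction n)
  case 0
  then show ?case by (simp add: perms_def LRmin_def)
next
  case (Suc n)
  have "(\<Sum>\<sigma>\<in>perms (Suc n). real (LRmin (Suc n) \<sigma>) * x ^ LRmin (Suc n) \<sigma>)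
      = (\<Sum>\<tau>\<in>perms n. real (LRmin n \<tau>) * x ^ LRmin n \<tau>) * (x + n) + x * (\<Sum>\<tau>\<in>perms n. x ^ LRmin n \<tau>)"
    by (simp add: sum_perms_Suc[of "\<lambda>k. real k * x ^ k"] sum.distrib sum_distrib_left sum_distrib_right
        algebra_simps)
  also have "\<dots> = pochhammer x (Suc n) * (\<Sum>j<Suc n. x / (x + real j))"
    using assms by (simp add: Suc.IH sum_power_LRmin pochhammer_Suc field_simps)
  finally show ?case .
qed

lemma E_LR_eq_sum:
  assumes "x > 0"
  shows "E_LR n x = (\<Sum>j<n. x / (x + real j))"
proof -
  have "pochhammer x n > 0"
    using assms by (simp add: pochhammer_pos)
  then show ?thesis
    by (simp add: E_LR_def P_LR_def sum_LRmin_mult_power[OF assms] sum_divide_distrib[symmetric]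
        mult.assoc[symmetric])
qed

lemma ln_add_one_diff_bounds:
  fixes y :: real
  assumes "y > 0"
  shows "1 / (y + 1) \<le> ln (y + 1) - ln y" and "ln (y + 1) - ln y \<le> 1 / y"
proof -
  have "ln (y / (y + 1)) \<le> y / (y + 1) - 1"
    using assms by (intro ln_le_minus_one) auto
  then show "1 / (y + 1) \<le> ln (y + 1) - ln y"
    using assms by (simp add: ln_div field_simps)
  have "ln (y + 1) - ln y = ln ((y + 1) / y)"
    using assms by (simp add: ln_div)
  also have "\<dots> = ln (1 + 1 / y)"
    using assms by (simp add: field_simps)
  also have "\<dots> \<le> 1 / y"
    using assms by (intro ln_add_one_self_le_self) auto
  finally show "ln (y + 1) - ln y \<le> 1 / y" .
qed

lemma sum_inverse_ln_bounds:
  fixes q :: real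
  assumes "q > 0"
  shows "(\<Sum>j<n. 1 / (q + real j + 1)) \<le> ln (q + real n) - ln q"
    and "ln (q + real n) - ln q \<le> (\<Sum>j<n. 1 / (q + real j))"
proof (induction n)
  case (Suc n)
  have step: "1 / (q + real n + 1) \<le> ln (q + real n + 1) - ln (q + real n)"
    "ln (q + real n + 1) - ln (q + real n) \<le> 1 / (q + real n)"
    using assms by (intro ln_add_one_diff_bounds; simp)+
  have "ln (q + real (Suc n)) = ln (q + real n + 1)" by (simp add: add_ac)
  with Suc.IH step show "(\<Sum>j<Suc n. 1 / (q + real j + 1)) \<le> ln (q + real (Suc n)) - ln q"
    and "ln (q + real (Suc n)) - ln q \<le> (\<Sum>j<Suc n. 1 / (q + real j))"
    unfolding sum.lessThan_Suc by linarith+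
qed simp_all

lemma E_LR_Suc:
  assumes "q > 0"
  shows "E_LR (Suc m) q = 1 + q * (\<Sum>j<m. 1 / (q + real j + 1))"
  unfolding E_LR_eq_sum[OF assms] sum.lessThan_Suc_shift
  using assms by (simp add: sum_distrib_left add_ac)

lemma E_LR_bounds_q_ln:
  assumes "n \<ge> 1" and q: "q > 0"
  shows "1 + q * ln (real n) - q\<^sup>2 \<le> E_LR n q" and "E_LR n q \<le> 1 + q * ln (real n) + q"
proof -
  obtain m where n: "n = Suc m" using assms(1) by (cases n) auto
  define T where "T = (\<Sum>j<m. 1 / (q + real j + 1))"
  have E: "E_LR n q = 1 + q * T" unfolding n T_def by (rule E_LR_Suc[OF q])
  have "ln n \<le> ln (q + 1 + real m)" using q n by simp
  then have "ln n - q \<le> ln (q + 1 + real m) - ln (q + 1)"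
    using ln_add_one_self_le_self[of q] q by (simp add: add.commute)
  also have "\<dots> \<le> T"
    unfolding T_def using sum_inverse_ln_bounds(2)[of "q + 1" m] q by (simp add: add_ac)
  finally have "q * (ln n - q) \<le> q * T" using q by simp
  then show "1 + q * ln n - q\<^sup>2 \<le> E_LR n q" by (simp add: E power2_eq_square algebra_simps)
  have "T \<le> (\<Sum>j<m. 1 / (real j + 1))"
    unfolding T_def using q by (intro sum_mono divide_left_mono) auto
  also have "\<dots> = harm m" by (simp add: harm_altdef inverse_eq_divide add.commute)
  also have "\<dots> \<le> harm n" unfolding n by (intro harm_mono) simp
  also have "\<dots> \<le> 1 + ln n"
    using euler_mascheroni_sequence_decreasing[of 1 n] assms(1) by (simp add: harm_def)
  finally have "q * T \<le> q * (1 + ln n)" using q by simp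
  then show "E_LR n q \<le> 1 + q * ln n + q" by (simp add: E algebra_simps)
qed

lemma E_LR_bounds_ln_ratio:
  assumes q: "q > 0"
  shows "q * ln ((real n + q) / (1 + q)) \<le> E_LR n q"
    and "E_LR n q \<le> q * ln ((real n + q) / (1 + q)) + 2"
proof -
  have ln_ratio: "ln ((n + q) / (1 + q)) = ln (q + n) - ln q - (ln (q + 1) - ln q)"
    using q by (simp add: ln_div add.commute)
  have "0 \<le> q * (ln (q + 1) - ln q)" using q by simp
  moreover have "q * (ln (q + n) - ln q) \<le> q * (\<Sum>j<n. 1 / (q + real j))"
    using sum_inverse_ln_bounds(2)[OF q, of n] q by (intro mult_left_mono) auto
  moreover have "q * (\<Sum>j<n. 1 / (q + real j)) = E_LR n q"
    by (simp add: E_LR_eq_sum q sum_distrib_left)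
  ultimately show "q * ln ((n + q) / (1 + q)) \<le> E_LR n q"
    unfolding ln_ratio by (simp add: right_diff_distrib)
  have "q * (ln (q + 1) - ln q) \<le> q * (1 / q)"
    using ln_add_one_diff_bounds(2)[OF q] q by (intro mult_left_mono) auto
  moreover have "E_LR n q \<le> 1 + q * (ln (q + n) - ln q)"
  proof (cases n)
    case (Suc m)
    have "ln (q + m) \<le> ln (q + Suc m)" using q by simp
    with sum_inverse_ln_bounds(1)[OF q, of m]
    have "(\<Sum>j<m. 1 / (q + real j + 1)) \<le> ln (q + Suc m) - ln q" by linarith
    then show ?thesis
      unfolding Suc E_LR_Suc[OF q] using q by (simp add: mult_left_mono)
  qed (simp add: E_LR_eq_sum q)
  ultimately show "E_LR n q \<le> q * ln ((n + q) / (1 + q)) + 2"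
    unfolding ln_ratio using q by (simp add: right_diff_distrib)
qed

lemma E_LR_bounds_linear:
  assumes q: "q > 0"
  shows "real n * (q / (q + real n)) \<le> E_LR n q" and "E_LR n q \<le> real n"
proof -
  have "(\<Sum>j<n. q / (q + n)) \<le> (\<Sum>j<n. q / (q + real j))"
    using q by (intro sum_mono divide_left_mono) auto
  then show "n * (q / (q + n)) \<le> E_LR n q" by (simp add: E_LR_eq_sum q)
  have "(\<Sum>j<n. q / (q + real j)) \<le> (\<Sum>j<n. 1)"
    using q by (intro sum_mono) auto
  then show "E_LR n q \<le> n" by (simp add: E_LR_eq_sum q)
qed

lemma asymp_equiv_if_bigo_1_diff:
  fixes f g :: "'a \<Rightarrow> real"
  assumes "(\<lambda>x. f x - g x) \<in> O[F](\<lambda>_. 1)" and "filterlim g at_top F"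
  shows "f \<sim>[F] g"
proof -
  have "(\<lambda>_. 1) \<in> o[F](g)"
    using filterlim_at_top_imp_at_infinity[OF assms(2)]
    by (simp add: smallomega_iff_smallo[symmetric] smallomega_1_conv_filterlim)
  with assms(1) show ?thesis
    by (simp add: asymp_equiv_altdef landau_o.big_small_trans)
qed

lemma tendsto_divide_if_asymp_equiv_const_mult:
  fixes f h :: "'a \<Rightarrow> real"
  assumes "f \<sim>[F] (\<lambda>x. c * h x)" and "eventually (\<lambda>x. h x \<noteq> 0) F"
  shows "((\<lambda>x. f x / h x) \<longlongrightarrow> c) F"
proof -
  have "(\<lambda>x. f x / h x) \<sim>[F] (\<lambda>x. c * h x / h x)"
    by (rule asymp_equiv_divide[OF assms(1) asymp_equiv_refl])
  also have "eventually (\<lambda>x. c * h x / h x = c) F"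
    using assms(2) by eventually_elim simp
  then have "(\<lambda>x. c * h x / h x) \<sim>[F] (\<lambda>_. c)"
    by (rule asymp_equiv_refl_ev)
  finally show ?thesis by (rule asymp_equivD_const)
qed

lemma E_LR_tendsto_one_plus:
  fixes q :: "nat \<Rightarrow> real"
  assumes qpos: "eventually (\<lambda>n. q n > 0) sequentially"
    and lim: "(\<lambda>n. q n * ln (real n)) \<longlonglongrightarrow> c"
  shows "(\<lambda>n. E_LR n (q n)) \<longlonglongrightarrow> 1 + c"
proof -
  have "(\<lambda>n. q n * ln n / ln n) \<longlonglongrightarrow> 0"
    by (rule tendsto_divide_0[OF lim], rule filterlim_at_top_imp_at_infinity) real_asymp
  moreover have "eventually (\<lambda>n. q n * ln n / ln n = q n) sequentially"
    using eventually_ge_at_top[of 2]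
  proof eventually_elim
    case (elim n)
    then have "ln n > 0" by simp
    then show ?case by simp
  qed
  ultimately have q0: "q \<longlonglongrightarrow> 0"
    by (rule Lim_transform_eventually)
  have "(\<lambda>n. 1 + q n * ln n - (q n)\<^sup>2) \<longlonglongrightarrow> 1 + c - 0\<^sup>2"
    and "(\<lambda>n. 1 + q n * ln n + q n) \<longlonglongrightarrow> 1 + c + 0"
    by (intro tendsto_diff tendsto_add tendsto_const tendsto_power lim q0)+
  then have lower: "(\<lambda>n. 1 + q n * ln n - (q n)\<^sup>2) \<longlonglongrightarrow> 1 + c"
    and upper: "(\<lambda>n. 1 + q n * ln n + q n) \<longlonglongrightarrow> 1 + c"
    by simp_all
  have "eventually (\<lambda>n. 1 + q n * ln n - (q n)\<^sup>2 \<le> E_LR n (q n)) sequentially"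
    using qpos eventually_ge_at_top[of 1] by eventually_elim (rule E_LR_bounds_q_ln)
  moreover have "eventually (\<lambda>n. E_LR n (q n) \<le> 1 + q n * ln n + q n) sequentially"
    using qpos eventually_ge_at_top[of 1] by eventually_elim (rule E_LR_bounds_q_ln)
  ultimately show ?thesis
    using lower upper by (rule tendsto_sandwich)
qed

lemma E_LR_asymp_equiv_q_ln:
  fixes q :: "nat \<Rightarrow> real"
  assumes qpos: "eventually (\<lambda>n. q n > 0) sequentially"
    and top: "filterlim (\<lambda>n. q n * ln (real n)) at_top sequentially"
    and bounded: "q \<in> O(\<lambda>_. 1)"
  shows "(\<lambda>n. E_LR n (q n)) \<sim>[at_top] (\<lambda>n. q n * ln (real n))"
proof (rule asymp_equiv_if_bigo_1_diff[OF _ top])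
  obtain M where "eventually (\<lambda>n. norm (q n) \<le> M * norm (1::real)) sequentially"
    using landau_o.bigE[OF bounded] by blast
  with qpos eventually_ge_at_top[of 1]
  have "eventually (\<lambda>n. norm (E_LR n (q n) - q n * ln n) \<le> (1 + M + M\<^sup>2) * norm (1::real)) sequentially"
  proof eventually_elim
    case (elim n)
    then have q: "0 < q n" "q n \<le> M" by auto
    then have "(q n)\<^sup>2 \<le> M\<^sup>2" by (intro power_mono) auto
    with E_LR_bounds_q_ln[OF \<open>1 \<le> n\<close> \<open>0 < q n\<close>] q zero_le_power2[of M] show ?case
      unfolding real_norm_def abs_one mult_1_right abs_le_iff by linarith
  qed
  then show "(\<lambda>n. E_LR n (q n) - q n * ln n) \<in> O(\<lambda>_. 1)"
    by (rule bigoI)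
qed

lemma E_LR_asymp_equiv_via_ln_ratio:
  fixes q h :: "nat \<Rightarrow> real"
  assumes qpos: "eventually (\<lambda>n. q n > 0) sequentially"
    and equiv: "(\<lambda>n. q n * ln ((real n + q n) / (1 + q n))) \<sim>[at_top] h"
    and top: "filterlim h at_top sequentially"
  shows "(\<lambda>n. E_LR n (q n)) \<sim>[at_top] h"
proof -
  have "(\<lambda>n. E_LR n (q n)) \<sim>[at_top] (\<lambda>n. q n * ln ((n + q n) / (1 + q n)))"
  proof (rule asymp_equiv_if_bigo_1_diff)
    show "filterlim (\<lambda>n. q n * ln ((n + q n) / (1 + q n))) at_top sequentially"
      using asymp_equiv_at_top_transfer[OF asymp_equiv_symI[OF equiv] top] .
    have "eventually (\<lambda>n. norm (E_LR n (q n) - q n * ln ((n + q n) / (1 + q n))) \<le> 2 * norm (1::real))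
      sequentially"
      using qpos
    proof eventually_elim
      case (elim n)
      from E_LR_bounds_ln_ratio[OF elim, of n] show ?case
        unfolding real_norm_def abs_one mult_1_right abs_le_iff by linarith
    qed
    then show "(\<lambda>n. E_LR n (q n) - q n * ln ((n + q n) / (1 + q n))) \<in> O(\<lambda>_. 1)"
      by (rule bigoI)
  qed
  then show ?thesis using equiv by (rule asymp_equiv_trans)
qed

lemma E_LR_asymp_equiv_sublinear:
  fixes q :: "nat \<Rightarrow> real"
  assumes qpos: "eventually (\<lambda>n. q n > 0) sequentially"
    and top: "filterlim q at_top sequentially" and sublinear: "q \<in> o(\<lambda>n. real n)"
  shows "(\<lambda>n. E_LR n (q n)) \<sim>[at_top] (\<lambda>n. q n * ln ((real n + q n) / (1 + q n)))"
proof (rule E_LR_asymp_equiv_via_ln_ratio[OF qpos asymp_equiv_refl])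
  have "eventually (\<lambda>n. 1 \<le> q n) sequentially" using top by (simp add: filterlim_at_top)
  moreover have "eventually (\<lambda>n. norm (q n) \<le> 1/4 * norm (real n)) sequentially"
    using landau_o.smallD[OF sublinear, of "1/4"] by simp
  ultimately have le: "eventually (\<lambda>n. ln 2 * q n \<le> q n * ln ((n + q n) / (1 + q n))) sequentially"
  proof eventually_elim
    case (elim n)
    then have "2 \<le> (n + q n) / (1 + q n)" by (simp add: field_simps)
    then have "ln 2 \<le> ln ((n + q n) / (1 + q n))" by simp
    then show ?case using elim by (simp add: mult.commute)
  qed
  have "filterlim (\<lambda>n. ln 2 * q n) at_top sequentially"
    by (rule filterlim_tendsto_pos_mult_at_top[OF tendsto_const _ top]) simp
  from filterlim_at_top_mono[OF this le]
  show "filterlim (\<lambda>n. q n * ln ((n + q n) / (1 + q n))) at_top sequentially" .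
qed

lemma ln_ratio_decomposition:
  fixes x y :: real
  assumes "x > 0" "y > 0"
  shows "ln ((x + y) / (1 + y)) = (1 - \<alpha>) * ln x + ln (1 + y / x) - ln (1 + 1 / y) - ln (y / x powr \<alpha>)"
proof -
  have "x * (1 + y / x) = x + y" "y * (1 + 1 / y) = 1 + y"
    using assms by (simp_all add: field_simps)
  moreover have "0 < 1 + y / x" "0 < 1 + 1 / y"
    using assms by (intro add_pos_pos; simp)+
  ultimately have "ln (x + y) = ln x + ln (1 + y / x)" "ln (1 + y) = ln y + ln (1 + 1 / y)"
    using ln_mult[of x "1 + y / x"] ln_mult[of y "1 + 1 / y"] assms by simp_all
  moreover have "ln (y / x powr \<alpha>) = ln y - \<alpha> * ln x"
    using assms by (simp add: ln_div ln_powr)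
  moreover have "ln ((x + y) / (1 + y)) = ln (x + y) - ln (1 + y)"
    using assms by (simp add: ln_div)
  ultimately show ?thesis by (simp add: algebra_simps)
qed

lemma ln_ratio_asymp_equiv_powr:
  fixes q :: "nat \<Rightarrow> real"
  assumes qpos: "eventually (\<lambda>n. q n > 0) sequentially"
    and c: "c > 0" and \<alpha>: "0 < \<alpha>" "\<alpha> < 1"
    and equiv: "q \<sim>[at_top] (\<lambda>n. c * real n powr \<alpha>)"
  shows "(\<lambda>n. ln ((real n + q n) / (1 + q n))) \<sim>[at_top] (\<lambda>n. (1 - \<alpha>) * ln (real n))"
proof (rule asymp_equiv_if_bigo_1_diff)
  have "eventually (\<lambda>n. real n powr \<alpha> \<noteq> 0) sequentially"
    using eventually_gt_at_top[of 0] by eventually_elim simp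
  with equiv have ratio: "(\<lambda>n. q n / real n powr \<alpha>) \<longlonglongrightarrow> c"
    by (rule tendsto_divide_if_asymp_equiv_const_mult)
  have "filterlim (\<lambda>n. c * real n powr \<alpha>) at_top sequentially"
    using c \<alpha> by real_asymp
  then have "filterlim q at_top sequentially"
    by (rule asymp_equiv_at_top_transfer[OF asymp_equiv_symI[OF equiv]])
  then have inverse_q: "(\<lambda>n. 1 / q n) \<longlonglongrightarrow> 0"
    by (intro tendsto_divide_0[OF tendsto_const] filterlim_at_top_imp_at_infinity)
  have "(\<lambda>n. q n / real n powr \<alpha> * (real n powr \<alpha> / real n)) \<longlonglongrightarrow> c * 0"
    using \<alpha> by (intro tendsto_mult ratio) real_asymp
  moreover have "eventually (\<lambda>n. q n / real n powr \<alpha> * (real n powr \<alpha> / real n) = q n / real n)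
    sequentially"
    using eventually_gt_at_top[of 0] by eventually_elim simp
  ultimately have q_over_n: "(\<lambda>n. q n / real n) \<longlonglongrightarrow> 0"
    using Lim_transform_eventually by fastforce
  have "(\<lambda>n. ln (1 + q n / n) - ln (1 + 1 / q n) - ln (q n / real n powr \<alpha>))
      \<longlonglongrightarrow> ln (1 + 0) - ln (1 + 0) - ln c"
    using c by (intro tendsto_diff tendsto_ln tendsto_add tendsto_const q_over_n inverse_q ratio) simp_all
  moreover have "eventually (\<lambda>n. ln (1 + q n / n) - ln (1 + 1 / q n) - ln (q n / real n powr \<alpha>)
      = ln ((n + q n) / (1 + q n)) - (1 - \<alpha>) * ln n) sequentially"
    using qpos eventually_gt_at_top[of 0]
  proof eventually_elim
    case (elim n)
    with ln_ratio_decomposition[of "real n" "q n" \<alpha>] show ?case by simp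
  qed
  ultimately have "(\<lambda>n. ln ((n + q n) / (1 + q n)) - (1 - \<alpha>) * ln n) \<longlonglongrightarrow> - ln c"
    using Lim_transform_eventually by fastforce
  then show "(\<lambda>n. ln ((n + q n) / (1 + q n)) - (1 - \<alpha>) * ln n) \<in> O(\<lambda>_. 1)"
    by (intro bigoI_tendsto[where c = "- ln c"]) simp_all
  show "filterlim (\<lambda>n. (1 - \<alpha>) * ln (real n)) at_top sequentially"
    using \<alpha> by real_asymp
qed

lemma E_LR_asymp_equiv_powr:
  fixes q :: "nat \<Rightarrow> real"
  assumes qpos: "eventually (\<lambda>n. q n > 0) sequentially"
    and c: "c > 0" and \<alpha>: "0 < \<alpha>" "\<alpha> < 1"
    and equiv: "q \<sim>[at_top] (\<lambda>n. c * real n powr \<alpha>)"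
  shows "(\<lambda>n. E_LR n (q n)) \<sim>[at_top] (\<lambda>n. c * (1 - \<alpha>) * real n powr \<alpha> * ln (real n))"
proof (rule E_LR_asymp_equiv_via_ln_ratio[OF qpos])
  show "filterlim (\<lambda>n. c * (1 - \<alpha>) * real n powr \<alpha> * ln (real n)) at_top sequentially"
    using c \<alpha> by real_asymp
  from asymp_equiv_mult[OF equiv ln_ratio_asymp_equiv_powr[OF qpos c \<alpha> equiv]]
  show "(\<lambda>n. q n * ln ((n + q n) / (1 + q n))) \<sim>[at_top] (\<lambda>n. c * (1 - \<alpha>) * real n powr \<alpha> * ln n)"
    by (simp add: mult_ac)
qed

lemma ln_ratio_tendsto_linear:
  fixes q :: "nat \<Rightarrow> real"
  assumes qpos: "eventually (\<lambda>n. q n > 0) sequentially"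
    and c: "c > 0" and equiv: "q \<sim>[at_top] (\<lambda>n. c * real n)"
  shows "(\<lambda>n. ln ((real n + q n) / (1 + q n))) \<longlonglongrightarrow> ln ((1 + c) / c)"
proof -
  have "eventually (\<lambda>n. real n \<noteq> 0) sequentially"
    using eventually_gt_at_top[of 0] by eventually_elim simp
  with equiv have ratio: "(\<lambda>n. q n / real n) \<longlonglongrightarrow> c"
    by (rule tendsto_divide_if_asymp_equiv_const_mult)
  have "(\<lambda>n. (1 + q n / n) / (1 / n + q n / n)) \<longlonglongrightarrow> (1 + c) / (0 + c)"
    using c by (intro tendsto_divide tendsto_add tendsto_const lim_1_over_n ratio) simp
  moreover have "eventually (\<lambda>n. (1 + q n / n) / (1 / n + q n / n) = (n + q n) / (1 + q n)) sequentially"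
    using qpos eventually_gt_at_top[of 0]
  proof eventually_elim
    case (elim n)
    then have "1 + q n / n = (n + q n) / n" "1 / n + q n / n = (1 + q n) / n"
      by (simp_all add: field_simps)
    then show ?case using elim by simp
  qed
  ultimately have "(\<lambda>n. (n + q n) / (1 + q n)) \<longlonglongrightarrow> (1 + c) / c"
    using Lim_transform_eventually by fastforce
  then show ?thesis
    using c by (intro tendsto_ln) simp_all
qed

lemma E_LR_asymp_equiv_linear:
  fixes q :: "nat \<Rightarrow> real"
  assumes qpos: "eventually (\<lambda>n. q n > 0) sequentially"
    and c: "c > 0" and equiv: "q \<sim>[at_top] (\<lambda>n. c * real n)"
  shows "(\<lambda>n. E_LR n (q n)) \<sim>[at_top] (\<lambda>n. c * ln ((1 + c) / c) * real n)"
proof (rule E_LR_asymp_equiv_via_ln_ratio[OF qpos])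
  have "ln ((1 + c) / c) > 0"
    using c by simp
  then show "filterlim (\<lambda>n. c * ln ((1 + c) / c) * real n) at_top sequentially"
    using c by (intro filterlim_tendsto_pos_mult_at_top[OF tendsto_const _ filterlim_real_sequentially]) simp
  have "(\<lambda>n. ln ((n + q n) / (1 + q n))) \<sim>[at_top] (\<lambda>_. ln ((1 + c) / c))"
    using ln_ratio_tendsto_linear[OF qpos c equiv] \<open>ln ((1 + c) / c) > 0\<close>
    by (intro tendsto_imp_asymp_equiv_const) auto
  from asymp_equiv_mult[OF equiv this]
  show "(\<lambda>n. q n * ln ((n + q n) / (1 + q n))) \<sim>[at_top] (\<lambda>n. c * ln ((1 + c) / c) * real n)"
    by (simp add: mult_ac)
qed

lemma E_LR_asymp_equiv_superlinear:
  fixes q :: "nat \<Rightarrow> real"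
  assumes qpos: "eventually (\<lambda>n. q n > 0) sequentially"
    and top: "filterlim (\<lambda>n. q n / real n) at_top sequentially"
  shows "(\<lambda>n. E_LR n (q n)) \<sim>[at_top] (\<lambda>n. real n)"
proof (rule asymp_equiv_sandwich_real)
  have "(\<lambda>n. inverse (1 + inverse (q n / n))) \<longlonglongrightarrow> inverse (1 + 0)"
    by (intro tendsto_intros tendsto_inverse_0_at_top[OF top]) simp
  moreover have "eventually (\<lambda>n. inverse (1 + inverse (q n / n)) = q n / (q n + n)) sequentially"
    using qpos eventually_ge_at_top[of 1] by eventually_elim (simp add: field_simps)
  ultimately have "(\<lambda>n. q n / (q n + n)) \<longlonglongrightarrow> 1"
    using Lim_transform_eventually by fastforce
  then have "(\<lambda>n. real n * (q n / (q n + n))) \<sim>[at_top] (\<lambda>n. real n * 1)"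
    by (intro asymp_equiv_mult asymp_equiv_refl tendsto_imp_asymp_equiv_const) simp_all
  then show "(\<lambda>n. real n * (q n / (q n + n))) \<sim>[at_top] (\<lambda>n. real n)" by simp
  show "eventually (\<lambda>n. E_LR n (q n) \<in> {real n * (q n / (q n + n))..real n}) sequentially"
    using qpos
  proof eventually_elim
    case (elim n)
    from E_LR_bounds_linear[OF elim, of n] show ?case by simp
  qed
qed simp

theorem proposition1p1:
  fixes q :: "nat \<Rightarrow> real"
  assumes pos: "\<And>n. n \<ge> 1 \<Longrightarrow> q n > 0"
  shows
    "(q \<in> o(\<lambda>n. 1 / ln (real n)) \<longrightarrow> (\<lambda>n. E_LR n (q n)) \<longlonglongrightarrow> 1)
   \<and> (\<forall>c. 0 < c \<longrightarrow> (\<lambda>n. q n * ln (real n)) \<longlonglongrightarrow> c \<longrightarrow> (\<lambda>n. E_LR n (q n)) \<longlonglongrightarrow> 1 + c)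
   \<and> (filterlim (\<lambda>n. q n * ln (real n)) at_top sequentially \<and> q \<in> O(\<lambda>_. 1) \<longrightarrow>
        (\<lambda>n. E_LR n (q n)) \<sim>[at_top] (\<lambda>n. q n * ln (real n)))
   \<and> (filterlim q at_top sequentially \<and> q \<in> o(\<lambda>n. real n) \<longrightarrow>
        (\<lambda>n. E_LR n (q n)) \<sim>[at_top] (\<lambda>n. q n * ln ((real n + q n) / (1 + q n))))
   \<and> (\<forall>c \<alpha>. 0 < c \<and> 0 < \<alpha> \<and> \<alpha> < 1 \<and> q \<sim>[at_top] (\<lambda>n. c * real n powr \<alpha>) \<longrightarrow>
        (\<lambda>n. E_LR n (q n)) \<sim>[at_top] (\<lambda>n. c * (1 - \<alpha>) * real n powr \<alpha> * ln (real n)))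
   \<and> (\<forall>c. 0 < c \<and> q \<sim>[at_top] (\<lambda>n. c * real n) \<longrightarrow>
        (\<lambda>n. E_LR n (q n)) \<sim>[at_top] (\<lambda>n. c * ln ((1 + c) / c) * real n))
   \<and> filterlim (\<lambda>c::real. c * ln ((1 + c) / c)) (nhds 0) (at_right 0)
   \<and> filterlim (\<lambda>c::real. c * ln ((1 + c) / c)) (nhds 1) at_top
   \<and> (filterlim (\<lambda>n. q n / real n) at_top sequentially \<longrightarrow>
        (\<lambda>n. E_LR n (q n)) \<sim>[at_top] (\<lambda>n. real n))"
proof -
  have qpos: "eventually (\<lambda>n. q n > 0) sequentially"
    using eventually_ge_at_top[of 1] by eventually_elim (rule pos)
  have small: "(\<lambda>n. E_LR n (q n)) \<longlonglongrightarrow> 1" if "q \<in> o(\<lambda>n. 1 / ln (real n))"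
  proof -
    have "(\<lambda>n. q n * ln (real n)) \<longlonglongrightarrow> 0"
      using smalloD_tendsto[OF that] by simp
    from E_LR_tendsto_one_plus[OF qpos this] show ?thesis by simp
  qed
  have "filterlim (\<lambda>c::real. c * ln ((1 + c) / c)) (nhds 0) (at_right 0)"
    and "filterlim (\<lambda>c::real. c * ln ((1 + c) / c)) (nhds 1) at_top"
    by real_asymp+
  with small show ?thesis
    using E_LR_tendsto_one_plus[OF qpos] E_LR_asymp_equiv_q_ln[OF qpos]
      E_LR_asymp_equiv_sublinear[OF qpos] E_LR_asymp_equiv_powr[OF qpos]
      E_LR_asymp_equiv_linear[OF qpos] E_LR_asymp_equiv_superlinear[OF qpos]
    by blast
qed

end
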